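(* Let $L\subseteq\Sigma^*$ be regular and suppose the finite lattice $\mathrm{LQ}(L)$ has length equal to $|J(\mathrm{LQ}(L))|$ (this holds in particular when $\mathrm{LQ}(L)$ is a boolean algebra or, more generally, a distributive lattice). Then $\mathrm{ns}(L)=\mathrm{nsyn}(L)=|J(\mathrm{LQ}(L))|$, and the canonical residual automaton $N_L$ is a subatomic state-minimal nfa for $L$.
   Context: $\mathrm{LQ}(L)$ is the set of finite unions (including $\emptyset$) of left derivatives $u^{-1}L=\{w:uw\in L\}$, ordered by inclusion. $J(S)$ denotes the join-irreducible elements of a finite lattice $S$ (non-bottom $j$ with $j=\bigvee X\Rightarrow j\in X$). The length of a finite lattice is the maximal $n$ of a chain $s_0<s_1<\cdots<s_n$. The canonical residual automaton $N_L$ is the nfa with states $J(\mathrm{LQ}(L))$, transitions $X\xrightarrow{a}Y$ iff $Y\subseteq a^{-1}X$, initial states those $X\subseteq L$, and final states those $X$ with $\epsilon\in X$. $\mathrm{ns}(L)$ is the least number of states of an nfa (several initial states allowed) accepting $L$. An nfa for $L$ is subatomic if all its states accept languages in the boolean algebra generated by the two-sided derivatives $u^{-1}Lv^{-1}=\{w:uwv\in L\}$; $\mathrm{nsyn}(L)$ is the least number of states of a subatomic nfa for $L$. *)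

theory Defs
  imports Main
begin

text \<open>Languages over a finite alphabet, given by a finite type 'a; Sigma* = UNIV.\<close>

definition lderiv :: "'a list \<Rightarrow> 'a list set \<Rightarrow> 'a list set" where
  "lderiv u L = {w. u @ w \<in> L}"

definition tsderiv :: "'a list \<Rightarrow> 'a list set \<Rightarrow> 'a list \<Rightarrow> 'a list set" where
  "tsderiv u L v = {w. u @ w @ v \<in> L}"

record ('s, 'a) nfa =
  states :: "'s set"
  init   :: "'s set"
  final  :: "'s set"
  trans  :: "('s \<times> 'a \<times> 's) set"

definition nfa_wf :: "('s, 'a) nfa \<Rightarrow> bool" where
  "nfa_wf N \<longleftrightarrow> finite (states N) \<and> init N \<subseteq> states N \<and> final N \<subseteq> states N
      \<and> (\<forall>p a q. (p, a, q) \<in> trans N \<longrightarrow> p \<in> states N \<and> q \<in> states N)"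

fun steps :: "('s, 'a) nfa \<Rightarrow> 's set \<Rightarrow> 'a list \<Rightarrow> 's set" where
  "steps N Q [] = Q"
| "steps N Q (a # w) = steps N {q'. \<exists>q\<in>Q. (q, a, q') \<in> trans N} w"

definition lang_from :: "('s, 'a) nfa \<Rightarrow> 's \<Rightarrow> 'a list set" where
  "lang_from N q = {w. steps N {q} w \<inter> final N \<noteq> {}}"

definition accepts :: "('s, 'a) nfa \<Rightarrow> 'a list set" where
  "accepts N = {w. steps N (init N) w \<inter> final N \<noteq> {}}"

definition regular :: "'a list set \<Rightarrow> bool" where
  "regular L \<longleftrightarrow> (\<exists>N :: (nat, 'a) nfa. nfa_wf N \<and> accepts N = L)"

text \<open>ns(L): least number of states of an nfa accepting L (states coded as naturals,
  which is no restriction since any finite state set can be relabelled).\<close>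
definition ns :: "'a list set \<Rightarrow> nat" where
  "ns L = (LEAST n. \<exists>N :: (nat, 'a) nfa. nfa_wf N \<and> accepts N = L \<and> card (states N) = n)"

inductive_set bool_alg :: "'a list set set \<Rightarrow> 'a list set set" for G where
  gen: "X \<in> G \<Longrightarrow> X \<in> bool_alg G"
| empty: "{} \<in> bool_alg G"
| compl: "X \<in> bool_alg G \<Longrightarrow> - X \<in> bool_alg G"
| union: "X \<in> bool_alg G \<Longrightarrow> Y \<in> bool_alg G \<Longrightarrow> X \<union> Y \<in> bool_alg G"

definition two_sided_derivs :: "'a list set \<Rightarrow> 'a list set set" where
  "two_sided_derivs L = {tsderiv u L v | u v. True}"

definition subatomic :: "'a list set \<Rightarrow> ('s, 'a) nfa \<Rightarrow> bool" where
  "subatomic L N \<longleftrightarrow> nfa_wf N \<and> accepts N = L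
     \<and> (\<forall>q\<in>states N. lang_from N q \<in> bool_alg (two_sided_derivs L))"

definition nsyn :: "'a list set \<Rightarrow> nat" where
  "nsyn L = (LEAST n. \<exists>N :: (nat, 'a) nfa. subatomic L N \<and> card (states N) = n)"

definition LQ :: "'a list set \<Rightarrow> 'a list set set" where
  "LQ L = {\<Union>F | F. finite F \<and> F \<subseteq> {lderiv u L | u. True}}"

text \<open>Join-irreducible elements of LQ(L); the join of a finite family in LQ(L) is its union
  (LQ(L) is closed under finite unions) and the bottom is the empty language.\<close>
definition JLQ :: "'a list set \<Rightarrow> 'a list set set" where
  "JLQ L = {X \<in> LQ L. X \<noteq> {} \<and> (\<forall>Y. Y \<subseteq> LQ L \<longrightarrow> finite Y \<longrightarrow> X = \<Union>Y \<longrightarrow> X \<in> Y)}"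

definition lattice_length :: "'b set set \<Rightarrow> nat" where
  "lattice_length S = Max {n. \<exists>s. (\<forall>i\<le>n. s i \<in> S) \<and> (\<forall>i<n. s i \<subset> s (Suc i))}"

definition canonical_residual :: "'a list set \<Rightarrow> ('a list set, 'a) nfa" where
  "canonical_residual L =
     \<lparr> states = JLQ L,
       init = {X \<in> JLQ L. X \<subseteq> L},
       final = {X \<in> JLQ L. [] \<in> X},
       trans = {(X, a, Y). X \<in> JLQ L \<and> Y \<in> JLQ L \<and> Y \<subseteq> lderiv [a] X} \<rparr>"

end

theory Submission
  imports Defs
begin

text \<open>Every left derivative u\<inverse>L is the union of the state languages of the states an nfa
  for L reaches on u, so every element X of LQ(L) is the union of the languages of the states
  q with lang(q) \<subseteq> X. A strict chain of length n in LQ(L) therefore gives a strict chain of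
  such state sets, and every nfa for L has at least length(LQ(L)) = |J(LQ(L))| states.
  Conversely every element of LQ(L) is the union of the join-irreducibles below it, which
  makes each state X of N_L accept exactly X; as X is a union of the two-sided derivatives
  u\<inverse>L\<epsilon>\<inverse>, N_L is a subatomic nfa for L with |J(LQ(L))| states.\<close>

section \<open>Runs of nondeterministic automata\<close>

lemma steps_append: "steps N Q (u @ w) = steps N (steps N Q u) w"
  by (induction u arbitrary: Q) auto

lemma steps_eq_UN_singleton: "steps N Q w = (\<Union>q\<in>Q. steps N {q} w)"
proof (induction w arbitrary: Q)
  case Nil
  then show ?case by auto
next
  case (Cons a w)
  have "steps N Q (a # w) = (\<Union>q'\<in>{q'. \<exists>q\<in>Q. (q, a, q') \<in> trans N}. steps N {q'} w)"
    by (simp only: steps.simps Cons.IH[of "{q'. \<exists>q\<in>Q. (q, a, q') \<in> trans N}"])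
  also have "\<dots> = (\<Union>q\<in>Q. \<Union>q'\<in>{q'. (q, a, q') \<in> trans N}. steps N {q'} w)"
    by blast
  also have "\<dots> = (\<Union>q\<in>Q. steps N {q} (a # w))"
  proof (rule SUP_cong[OF refl])
    fix q
    show "(\<Union>q'\<in>{q'. (q, a, q') \<in> trans N}. steps N {q'} w) = steps N {q} (a # w)"
      using Cons.IH[of "{q'. (q, a, q') \<in> trans N}"] by simp
  qed
  finally show ?case .
qed

lemma steps_subset_states:
  assumes "nfa_wf N" "Q \<subseteq> states N"
  shows "steps N Q w \<subseteq> states N"
  using assms(2)
proof (induction w arbitrary: Q)
  case Nil
  then show ?case by simp
next
  case (Cons a w)
  have "{q'. \<exists>q\<in>Q. (q, a, q') \<in> trans N} \<subseteq> states N"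
    using assms(1) unfolding nfa_wf_def by blast
  then show ?case using Cons.IH by simp
qed

definition lang_from_set :: "('s, 'a) nfa \<Rightarrow> 's set \<Rightarrow> 'a list set" where
  "lang_from_set N S = (\<Union>q\<in>S. lang_from N q)"

lemma lang_from_set_eq: "lang_from_set N Q = {w. steps N Q w \<inter> final N \<noteq> {}}"
  by (subst steps_eq_UN_singleton) (auto simp: lang_from_set_def lang_from_def)

lemma accepts_eq_lang_from_set: "accepts N = lang_from_set N (init N)"
  by (simp add: accepts_def lang_from_set_eq)

lemma lderiv_accepts: "lderiv u (accepts N) = lang_from_set N (steps N (init N) u)"
  by (simp add: accepts_def lang_from_set_eq lderiv_def steps_append)

section \<open>Relabelling states\<close>

definition relabel :: "('s \<Rightarrow> 't) \<Rightarrow> ('s, 'a) nfa \<Rightarrow> ('t, 'a) nfa" where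
  "relabel f N = \<lparr> states = f ` states N, init = f ` init N, final = f ` final N,
     trans = (\<lambda>(p, a, q). (f p, a, f q)) ` trans N \<rparr>"

lemma nfa_wf_relabel: "nfa_wf N \<Longrightarrow> nfa_wf (relabel f N)"
  unfolding nfa_wf_def relabel_def by auto

lemma steps_relabel:
  assumes "inj_on f (states N)" "nfa_wf N" "Q \<subseteq> states N"
  shows "steps (relabel f N) (f ` Q) w = f ` steps N Q w"
  using assms(3)
proof (induction w arbitrary: Q)
  case Nil
  then show ?case by simp
next
  case (Cons a w)
  let ?Q' = "{q'. \<exists>q\<in>Q. (q, a, q') \<in> trans N}"
  have "?Q' \<subseteq> states N"
    using assms(2) unfolding nfa_wf_def by blast
  moreover have "{q'. \<exists>q\<in>f ` Q. (q, a, q') \<in> trans (relabel f N)} = f ` ?Q'"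
  proof (intro set_eqI iffI)
    fix x
    assume "x \<in> {q'. \<exists>q\<in>f ` Q. (q, a, q') \<in> trans (relabel f N)}"
    then obtain q p r where q: "q \<in> Q" "(p, a, r) \<in> trans N" "f q = f p" "x = f r"
      by (auto simp: relabel_def)
    have "p = q"
      using assms q Cons.prems unfolding inj_on_def nfa_wf_def by blast
    then show "x \<in> f ` ?Q'" using q by auto
  qed (force simp: relabel_def)
  ultimately show ?case using Cons.IH by simp
qed

lemma lang_from_relabel:
  assumes "inj_on f (states N)" "nfa_wf N" "q \<in> states N"
  shows "lang_from (relabel f N) (f q) = lang_from N q"
proof -
  have "f ` steps N {q} w \<inter> f ` final N \<noteq> {} \<longleftrightarrow> steps N {q} w \<inter> final N \<noteq> {}" for w
    using inj_on_image_Int[OF assms(1), of "steps N {q} w" "final N"]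
      steps_subset_states[OF assms(2), of "{q}" w] assms(2,3)
    by (auto simp: nfa_wf_def)
  then show ?thesis
    using steps_relabel[OF assms(1,2), of "{q}"] assms(3)
    by (simp add: lang_from_def relabel_def)
qed

lemma subatomic_relabel:
  assumes "inj_on f (states N)" "subatomic L N"
  shows "subatomic L (relabel f N)"
proof -
  have wf: "nfa_wf N" and init: "init N \<subseteq> states N"
    using assms(2) by (auto simp: subatomic_def nfa_wf_def)
  have "accepts (relabel f N) = (\<Union>q\<in>init N. lang_from (relabel f N) (f q))"
    by (simp add: accepts_eq_lang_from_set lang_from_set_def relabel_def)
  also have "\<dots> = accepts N"
    using lang_from_relabel[OF assms(1) wf] init
    by (auto simp: accepts_eq_lang_from_set lang_from_set_def)
  finally show ?thesis
    using assms(2) nfa_wf_relabel[OF wf] lang_from_relabel[OF assms(1) wf]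
    by (auto simp: subatomic_def relabel_def)
qed

lemma subatomic_nat_copy:
  assumes "subatomic L (N :: ('s, 'a) nfa)"
  obtains M :: "(nat, 'a) nfa" where "subatomic L M" "card (states M) = card (states N)"
proof -
  have "finite (states N)"
    using assms by (simp add: subatomic_def nfa_wf_def)
  then obtain f :: "'s \<Rightarrow> nat" where "bij_betw f (states N) {0..<card (states N)}"
    using ex_bij_betw_finite_nat by blast
  then have inj: "inj_on f (states N)"
    by (simp add: bij_betw_def)
  have "subatomic L (relabel f N)"
    using inj assms by (rule subatomic_relabel)
  moreover have "card (states (relabel f N)) = card (states N)"
    using inj by (simp add: relabel_def card_image)
  ultimately show thesis by (rule that)
qed

section \<open>The lattice of unions of left derivatives\<close>

lemma lderiv_in_LQ: "lderiv u L \<in> LQ L"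
  unfolding LQ_def by (intro CollectI exI[of _ "{lderiv u L}"]) auto

lemma empty_in_LQ: "{} \<in> LQ L"
  unfolding LQ_def by (intro CollectI exI[of _ "{}"]) auto

lemma Un_in_LQ:
  assumes "X \<in> LQ L" "Y \<in> LQ L"
  shows "X \<union> Y \<in> LQ L"
proof -
  obtain F G where "X = \<Union>F" "Y = \<Union>G" "finite F" "finite G"
      "F \<subseteq> {lderiv u L | u. True}" "G \<subseteq> {lderiv u L | u. True}"
    using assms unfolding LQ_def by blast
  then have "X \<union> Y = \<Union>(F \<union> G)" "finite (F \<union> G)" "F \<union> G \<subseteq> {lderiv u L | u. True}"
    by auto
  then show ?thesis unfolding LQ_def by blast
qed

lemma LQ_induct [consumes 1, case_names empty union]:
  assumes "X \<in> LQ L"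
    and "P {}"
    and "\<And>u Y. Y \<in> LQ L \<Longrightarrow> P Y \<Longrightarrow> P (lderiv u L \<union> Y)"
  shows "P X"
proof -
  obtain F where F: "X = \<Union>F" "finite F" "F \<subseteq> {lderiv u L | u. True}"
    using assms(1) unfolding LQ_def by blast
  have "\<Union>F \<in> LQ L \<and> P (\<Union>F)"
    using F(2,3)
  proof (induction F rule: finite_induct)
    case empty
    then show ?case using empty_in_LQ assms(2) by simp
  next
    case (insert D F)
    then obtain u where u: "D = lderiv u L" by auto
    have IH: "\<Union>F \<in> LQ L" "P (\<Union>F)"
      using insert by auto
    have "D \<union> \<Union>F \<in> LQ L"
      unfolding u using lderiv_in_LQ IH(1) by (rule Un_in_LQ)
    moreover have "P (D \<union> \<Union>F)"
      unfolding u using IH by (rule assms(3))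
    ultimately show ?case by simp
  qed
  then show ?thesis using F(1) by simp
qed

lemma lderiv_LQ_in_LQ:
  assumes "X \<in> LQ L"
  shows "lderiv v X \<in> LQ L"
  using assms
proof (induction rule: LQ_induct)
  case empty
  then show ?case using empty_in_LQ by (simp add: lderiv_def)
next
  case (union u Y)
  have "lderiv v (lderiv u L \<union> Y) = lderiv (u @ v) L \<union> lderiv v Y"
    by (auto simp: lderiv_def)
  then show ?case using Un_in_LQ[OF lderiv_in_LQ union.IH] by simp
qed

lemma LQ_subset_bool_alg: "LQ L \<subseteq> bool_alg (two_sided_derivs L)"
proof
  fix X
  assume "X \<in> LQ L"
  then show "X \<in> bool_alg (two_sided_derivs L)"
  proof (induction rule: LQ_induct)
    case empty
    show ?case by (rule bool_alg.empty)
  next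
    case (union u Y)
    have "lderiv u L = tsderiv u L []"
      by (simp add: lderiv_def tsderiv_def)
    then have "lderiv u L \<in> bool_alg (two_sided_derivs L)"
      by (auto intro: bool_alg.gen simp: two_sided_derivs_def)
    then show ?case using union.IH by (rule bool_alg.union)
  qed
qed

lemma LQ_eq_lang_from_set:
  assumes "nfa_wf N" "accepts N = L" "X \<in> LQ L"
  obtains S where "S \<subseteq> states N" "X = lang_from_set N S"
proof -
  have "\<exists>S \<subseteq> states N. X = lang_from_set N S"
    using assms(3)
  proof (induction rule: LQ_induct)
    case empty
    show ?case by (auto simp: lang_from_set_def)
  next
    case (union u Y)
    then obtain S where "S \<subseteq> states N" "Y = lang_from_set N S" by blast
    moreover have "steps N (init N) u \<subseteq> states N"
      using assms(1) by (intro steps_subset_states) (auto simp: nfa_wf_def)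
    ultimately show ?case
      using lderiv_accepts[of u N] assms(2)
      by (intro exI[of _ "steps N (init N) u \<union> S"]) (auto simp: lang_from_set_def)
  qed
  then show thesis using that by blast
qed

lemma finite_LQ:
  assumes "regular L"
  shows "finite (LQ L)"
proof -
  obtain N :: "(nat, 'a) nfa" where N: "nfa_wf N" "accepts N = L"
    using assms unfolding regular_def by blast
  have "{lderiv u L | u. True} \<subseteq> lang_from_set N ` Pow (states N)"
  proof
    fix X
    assume "X \<in> {lderiv u L | u. True}"
    then have "X \<in> LQ L"
      using lderiv_in_LQ by blast
    then obtain S where "S \<subseteq> states N" "X = lang_from_set N S"
      by (rule LQ_eq_lang_from_set[OF N])
    then show "X \<in> lang_from_set N ` Pow (states N)" by blast
  qed
  then have "finite {lderiv u L | u. True}"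
    by (rule finite_subset) (use N(1) in \<open>simp add: nfa_wf_def\<close>)
  moreover have "LQ L \<subseteq> Union ` Pow {lderiv u L | u. True}"
    unfolding LQ_def by blast
  ultimately show ?thesis
    by (meson finite_Pow_iff finite_imageI finite_subset)
qed

section \<open>Chains in LQ(L) and the number of states\<close>

definition states_below :: "('s, 'a) nfa \<Rightarrow> 'a list set \<Rightarrow> 's set" where
  "states_below N X = {q \<in> states N. lang_from N q \<subseteq> X}"

lemma lang_from_set_states_below:
  assumes "nfa_wf N" "accepts N = L" "X \<in> LQ L"
  shows "lang_from_set N (states_below N X) = X"
proof -
  obtain S where S: "S \<subseteq> states N" "X = lang_from_set N S"
    using LQ_eq_lang_from_set[OF assms] .
  then have "S \<subseteq> states_below N X"
    by (auto simp: lang_from_set_def states_below_def)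
  then show ?thesis
    using S(2) by (fastforce simp: lang_from_set_def states_below_def)
qed

lemma card_states_below_strict_mono:
  assumes "nfa_wf N" "X \<subset> Y" "lang_from_set N (states_below N Y) = Y"
  shows "card (states_below N X) < card (states_below N Y)"
proof (rule psubset_card_mono)
  show "finite (states_below N Y)"
    using assms(1) by (simp add: nfa_wf_def states_below_def)
  have "states_below N X \<noteq> states_below N Y"
  proof
    assume "states_below N X = states_below N Y"
    then have "Y = lang_from_set N (states_below N X)"
      using assms(3) by simp
    also have "\<dots> \<subseteq> X"
      by (auto simp: lang_from_set_def states_below_def)
    finally show False using assms(2) by blast
  qed
  then show "states_below N X \<subset> states_below N Y"
    using assms(2) by (auto simp: states_below_def)
qed

lemma LQ_chain_length_le_card_states:
  assumes "nfa_wf N" "accepts N = L"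
    and "\<forall>i\<le>n. s i \<in> LQ L" "\<forall>i<n. s i \<subset> s (Suc i)"
  shows "n \<le> card (states N)"
proof -
  have "i \<le> card (states_below N (s i))" if "i \<le> n" for i
    using that
  proof (induction i)
    case 0
    then show ?case by simp
  next
    case (Suc i)
    have "s i \<subset> s (Suc i)" "s (Suc i) \<in> LQ L"
      using Suc.prems assms(3,4) by auto
    then have "card (states_below N (s i)) < card (states_below N (s (Suc i)))"
      using card_states_below_strict_mono[OF assms(1)] lang_from_set_states_below[OF assms(1,2)]
      by blast
    then show ?case using Suc by simp
  qed
  also have "card (states_below N (s n)) \<le> card (states N)"
    using assms(1) by (intro card_mono) (auto simp: nfa_wf_def states_below_def)
  finally show ?thesis by simp
qed

lemma lattice_length_attained:
  assumes "S \<noteq> {}"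
    and "\<And>n s. \<forall>i\<le>n. s i \<in> S \<Longrightarrow> \<forall>i<n. s i \<subset> s (Suc i) \<Longrightarrow> n \<le> k"
  shows "\<exists>s. (\<forall>i\<le>lattice_length S. s i \<in> S) \<and> (\<forall>i<lattice_length S. s i \<subset> s (Suc i))"
proof -
  let ?C = "{n. \<exists>s. (\<forall>i\<le>n. s i \<in> S) \<and> (\<forall>i<n. s i \<subset> s (Suc i))}"
  have "?C \<subseteq> {..k}"
  proof
    fix n
    assume "n \<in> ?C"
    then obtain s where "\<forall>i\<le>n. s i \<in> S" "\<forall>i<n. s i \<subset> s (Suc i)"
      by blast
    then show "n \<in> {..k}" using assms(2) by simp
  qed
  then have "finite ?C"
    by (rule finite_subset) simp
  moreover obtain x where "x \<in> S"
    using assms(1) by blast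
  then have "0 \<in> ?C"
    by (intro CollectI exI[of _ "\<lambda>_. x"]) simp
  ultimately have "Max ?C \<in> ?C"
    by (intro Max_in) auto
  then show ?thesis unfolding lattice_length_def by simp
qed

lemma lattice_length_LQ_le_card_states:
  assumes "nfa_wf N" "accepts N = L"
  shows "lattice_length (LQ L) \<le> card (states N)"
proof -
  have chain_bound: "n \<le> card (states N)"
    if "\<forall>i\<le>n. s i \<in> LQ L" "\<forall>i<n. s i \<subset> s (Suc i)" for n s
    using assms that by (rule LQ_chain_length_le_card_states)
  have "LQ L \<noteq> {}"
    using empty_in_LQ by blast
  then have "\<exists>s. (\<forall>i\<le>lattice_length (LQ L). s i \<in> LQ L)
      \<and> (\<forall>i<lattice_length (LQ L). s i \<subset> s (Suc i))"
    by (rule lattice_length_attained[where k = "card (states N)"]) (rule chain_bound)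
  then show ?thesis
    using chain_bound by blast
qed

section \<open>The canonical residual automaton\<close>

lemma JLQ_subset_LQ: "JLQ L \<subseteq> LQ L"
  unfolding JLQ_def by blast

lemma Union_JLQ_below:
  assumes "finite (LQ L)" "X \<in> LQ L"
  shows "\<Union>{Y \<in> JLQ L. Y \<subseteq> X} = X"
  using assms(2)
proof (induction "card {Z \<in> LQ L. Z \<subset> X}" arbitrary: X rule: less_induct)
  case less
  show ?case
  proof (cases "X \<in> JLQ L \<or> X = {}")
    case True
    then show ?thesis by auto
  next
    case False
    then obtain F where F: "F \<subseteq> LQ L" "finite F" "X = \<Union>F" "X \<notin> F"
      using less.prems unfolding JLQ_def by blast
    have "Z \<subseteq> \<Union>{Y \<in> JLQ L. Y \<subseteq> X}" if "Z \<in> F" for Z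
    proof -
      have "Z \<subset> X" "Z \<in> LQ L"
        using F that by auto
      then have "{W \<in> LQ L. W \<subset> Z} \<subset> {W \<in> LQ L. W \<subset> X}"
        by auto
      then have "card {W \<in> LQ L. W \<subset> Z} < card {W \<in> LQ L. W \<subset> X}"
        using assms(1) by (intro psubset_card_mono) auto
      then have "\<Union>{Y \<in> JLQ L. Y \<subseteq> Z} = Z"
        using \<open>Z \<in> LQ L\<close> by (rule less.hyps)
      moreover have "\<Union>{Y \<in> JLQ L. Y \<subseteq> Z} \<subseteq> \<Union>{Y \<in> JLQ L. Y \<subseteq> X}"
        using \<open>Z \<subset> X\<close> by blast
      ultimately show ?thesis by simp
    qed
    then have "X \<subseteq> \<Union>{Y \<in> JLQ L. Y \<subseteq> X}"
      unfolding F(3) by (rule Union_least)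
    then show ?thesis by auto
  qed
qed

lemma nfa_wf_canonical_residual:
  assumes "finite (LQ L)"
  shows "nfa_wf (canonical_residual L)"
  using assms JLQ_subset_LQ finite_subset
  unfolding nfa_wf_def canonical_residual_def by fastforce

lemma lang_from_canonical_residual:
  assumes "finite (LQ L)" "X \<in> JLQ L"
  shows "lang_from (canonical_residual L) X = X"
proof -
  let ?N = "canonical_residual L"
  have "w \<in> lang_from ?N X \<longleftrightarrow> w \<in> X" if "X \<in> JLQ L" for w X
    using that
  proof (induction w arbitrary: X)
    case Nil
    then show ?case by (auto simp: lang_from_def canonical_residual_def)
  next
    case (Cons a w)
    have "a # w \<in> lang_from ?N X \<longleftrightarrow> w \<in> lang_from_set ?N {Y. (X, a, Y) \<in> trans ?N}"
      by (simp add: lang_from_def lang_from_set_eq)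
    also have "\<dots> \<longleftrightarrow> w \<in> \<Union>{Y \<in> JLQ L. Y \<subseteq> lderiv [a] X}"
      using Cons by (auto simp: lang_from_set_def canonical_residual_def)
    also have "\<dots> \<longleftrightarrow> a # w \<in> X"
      using Union_JLQ_below[OF assms(1) lderiv_LQ_in_LQ, of X "[a]"] Cons.prems JLQ_subset_LQ
      by (auto simp: lderiv_def)
    finally show ?case .
  qed
  then show ?thesis using assms(2) by blast
qed

lemma accepts_canonical_residual:
  assumes "finite (LQ L)"
  shows "accepts (canonical_residual L) = L"
proof -
  have "accepts (canonical_residual L) = \<Union>{X \<in> JLQ L. X \<subseteq> L}"
    using lang_from_canonical_residual[OF assms]
    by (simp add: accepts_eq_lang_from_set lang_from_set_def canonical_residual_def)
  also have "\<dots> = L"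
    using Union_JLQ_below[OF assms lderiv_in_LQ, of "[]"] by (simp add: lderiv_def)
  finally show ?thesis .
qed

lemma subatomic_canonical_residual:
  assumes "finite (LQ L)"
  shows "subatomic L (canonical_residual L)"
proof -
  have "lang_from (canonical_residual L) X \<in> bool_alg (two_sided_derivs L)"
    if "X \<in> states (canonical_residual L)" for X
  proof -
    have X: "X \<in> JLQ L"
      using that by (simp add: canonical_residual_def)
    then have "X \<in> LQ L"
      using JLQ_subset_LQ by blast
    then show ?thesis
      using LQ_subset_bool_alg lang_from_canonical_residual[OF assms X] by auto
  qed
  then show ?thesis
    using nfa_wf_canonical_residual[OF assms] accepts_canonical_residual[OF assms]
    unfolding subatomic_def by blast
qed

theorem mainTheorem18:
  fixes L :: "('a::finite) list set"
  assumes "regular L"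
    and "lattice_length (LQ L) = card (JLQ L)"
  shows "ns L = card (JLQ L) \<and> nsyn L = card (JLQ L)
         \<and> subatomic L (canonical_residual L)
         \<and> card (states (canonical_residual L)) = ns L"
proof -
  have sub: "subatomic L (canonical_residual L)"
    using finite_LQ[OF assms(1)] by (rule subatomic_canonical_residual)
  have card: "card (states (canonical_residual L)) = card (JLQ L)"
    by (simp add: canonical_residual_def)
  obtain M :: "(nat, 'a) nfa" where M: "subatomic L M" "card (states M) = card (JLQ L)"
    using subatomic_nat_copy[OF sub] card by metis
  have lower: "card (JLQ L) \<le> card (states N)"
    if "nfa_wf N" "accepts N = L" for N :: "(nat, 'a) nfa"
    using lattice_length_LQ_le_card_states[OF that] assms(2) by simp
  have ns: "ns L = card (JLQ L)"
    unfolding ns_def using M lower by (intro Least_equality) (auto simp: subatomic_def)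
  have nsyn: "nsyn L = card (JLQ L)"
    unfolding nsyn_def using M lower by (intro Least_equality) (auto simp: subatomic_def)
  show ?thesis using ns nsyn sub card by simp
qed

end
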